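(* In the setting of the context, let $h_0=\max\{y\ge0:\frac{p(m-\sqrt m)}{1-p}\ge yp+\sqrt y\}$, $\beta=0.4215\cdot\frac{p^2+(1-p)^2}{p(1-p)}$, $h_1=h_0(1-p)-\sqrt{p(1-p)h_0}-\frac{\beta}{\sqrt{h_0}}$, and $\overline{\mathcal R_2}=\{(h,\ell):h\ge\max\{h_0,\sqrt m\},\ \ell<\sqrt m\}$. Then $$\inf_{(h,\ell)\in\overline{\mathcal R_2}}\mathbb E_{\mathbf n}\Big[\frac{\mathrm{REW}_A(\mathbf n,\rho;\mathcal G)}{\mathrm{OPT}(\mathbf n)}\Big]\ge\min\Big\{1-\frac1{\sqrt m},\ \frac{h_1}{m}\Big\}.$$
   Context: Setting: $m$ units of a divisible resource; two agent types with mean rewards $r_1>r_2$ in $(0,1)$; integers $h,\ell\ge0$ chosen adversarially; sampling probability $p\in(0,1)$; $s_1\sim\mathrm{Bin}(h,p)$, $s_2\sim\mathrm{Bin}(\ell,p)$ independent; $\mathbf n=(n_1,n_2)=(h-s_1,\ell-s_2)$; $\mathbb E_{\mathbf n}$ denotes expectation over this sampling. $\mathrm{OPT}(\mathbf n)=r_1\min\{n_1,m\}+r_2\min\{n_2,(m-n_1)^+\}$. The algorithm considered protects type 1 with protection level derived from $s_1$ (the case of the "good event" $\hat r_1>\hat r_2$, where $\hat r_i$ are empirical mean rewards of sampled agents) on the ordered sequence in which the $n_2$ type 2 agents arrive before the $n_1$ type 1 agents; its reward is $$\mathrm{REW}_A(\mathbf n,\rho;\mathcal G)=\min\Big\{n_2,\Big(m-\tfrac{1-p}{p}s_1\Big)^+\Big\}r_2+\min\Big\{m-\min\Big\{n_2,\Big(m-\tfrac{1-p}{p}s_1\Big)^+\Big\},\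 n_1\Big\}r_1.$$ *)

theory Defs
  imports "HOL-Probability.Probability"
begin

definition OPT :: "real \<Rightarrow> real \<Rightarrow> real \<Rightarrow> nat \<Rightarrow> nat \<Rightarrow> real" where
  "OPT m r1 r2 n1 n2 = r1 * min (real n1) m + r2 * min (real n2) (max (m - real n1) 0)"

text \<open>Reward of the algorithm under the good event (type 2 agents arrive first).\<close>
definition REW_A :: "real \<Rightarrow> real \<Rightarrow> real \<Rightarrow> real \<Rightarrow> nat \<Rightarrow> nat \<Rightarrow> nat \<Rightarrow> real" where
  "REW_A m p r1 r2 s1 n1 n2 =
     (let a = min (real n2) (max (m - (1 - p) / p * real s1) 0)
      in a * r2 + min (m - a) (real n1) * r1)"

definition ratio :: "real \<Rightarrow> real \<Rightarrow> real \<Rightarrow> real \<Rightarrow> nat \<Rightarrow> nat \<Rightarrow> nat \<Rightarrow> real" where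
  "ratio m p r1 r2 s1 n1 n2 =
     (if OPT m r1 r2 n1 n2 = 0 then 1 else REW_A m p r1 r2 s1 n1 n2 / OPT m r1 r2 n1 n2)"

definition expected_ratio :: "real \<Rightarrow> real \<Rightarrow> real \<Rightarrow> real \<Rightarrow> nat \<Rightarrow> nat \<Rightarrow> real" where
  "expected_ratio m p r1 r2 h l =
     measure_pmf.expectation (pair_pmf (binomial_pmf h p) (binomial_pmf l p))
       (\<lambda>(s1, s2). ratio m p r1 r2 s1 (h - s1) (l - s2))"

definition h0 :: "real \<Rightarrow> real \<Rightarrow> real" where
  "h0 m p = Sup {y. 0 \<le> y \<and> p * (m - sqrt m) / (1 - p) \<ge> y * p + sqrt y}"

definition beta :: "real \<Rightarrow> real" where
  "beta p = 0.4215 * (p\<^sup>2 + (1 - p)\<^sup>2) / (p * (1 - p))"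

definition h1 :: "real \<Rightarrow> real \<Rightarrow> real" where
  "h1 m p = h0 m p * (1 - p) - sqrt (p * (1 - p) * h0 m p) - beta p / sqrt (h0 m p)"

end

theory Submission
  imports Defs
begin

text \<open>
  With fewer than \<open>\<surd>m\<close> type 2 agents, the algorithm gives them at most \<open>\<surd>m\<close> units, so
  its ratio is at least \<open>min (m - \<surd>m) n\<^sub>1 / m\<close>. For \<open>n\<^sub>1 = h - s\<^sub>1\<close> with
  \<open>s\<^sub>1 \<sim> Bin(h, p)\<close>, bound the concave function \<open>min (m - \<surd>m)\<close> from below by a tangent
  parabola: its expectation only involves the mean and the variance of \<open>s\<^sub>1\<close>. Choosing the
  parabola according to the slack \<open>m - \<surd>m - h\<^sub>0 (1 - p) \<ge> 0\<close> and the standard deviation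
  \<open>\<sigma> = \<surd>(p (1 - p) h\<^sub>0)\<close> yields \<open>h\<^sub>1\<close>; the term \<open>\<beta> / \<surd>h\<^sub>0\<close> guarantees
  \<open>\<sigma> + \<beta> / \<surd>h\<^sub>0 \<ge> 1/4\<close>, which pays for the extra variance when \<open>h > h\<^sub>0\<close>.
\<close>

lemma real_sqrt_le_self:
  assumes "1 \<le> x"
  shows "sqrt x \<le> x"
proof -
  have "sqrt x * 1 \<le> sqrt x * sqrt x" using assms by (intro mult_left_mono) auto
  then show ?thesis using assms by simp
qed

lemma expectation_binomial_pmf_Suc:
  fixes f :: "nat \<Rightarrow> real"
  assumes p: "p \<in> {0..1}"
  shows "measure_pmf.expectation (binomial_pmf (Suc n) p) f =
           p * measure_pmf.expectation (binomial_pmf n p) (\<lambda>k. f (Suc k))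
           + (1 - p) * measure_pmf.expectation (binomial_pmf n p) f"
proof -
  have eq: "binomial_pmf (Suc n) p = bernoulli_pmf p \<bind>
      (\<lambda>b. map_pmf (\<lambda>k. (if b then 1 else 0) + k) (binomial_pmf n p))"
    using p by (subst binomial_pmf_Suc) (simp_all add: map_pmf_def)
  have "measure_pmf.expectation (binomial_pmf (Suc n) p) f =
     (\<Sum>b\<in>UNIV. pmf (bernoulli_pmf p) b *\<^sub>R measure_pmf.expectation
        (map_pmf (\<lambda>k. (if b then 1 else 0) + k) (binomial_pmf n p)) f)"
    unfolding eq by (rule pmf_expectation_bind) (use p finite_set_pmf_binomial_pmf[OF p] in auto)
  then show ?thesis
    using p by (simp add: UNIV_bool)
qed

lemma expectation_binomial_pmf_sq_diff:
  assumes p: "p \<in> {0..1}"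
  shows "measure_pmf.expectation (binomial_pmf n p) (\<lambda>k. (real k - z)\<^sup>2)
           = n * p * (1 - p) + (n * p - z)\<^sup>2"
proof (induction n arbitrary: z)
  case 0
  then show ?case using p by (simp add: binomial_pmf_0)
next
  case (Suc n)
  have shift: "(\<lambda>k. (real (Suc k) - z)\<^sup>2) = (\<lambda>k. (real k - (z - 1))\<^sup>2)"
    by (simp add: algebra_simps)
  show ?case
    unfolding expectation_binomial_pmf_Suc[OF p] shift Suc
    by (simp add: power2_eq_square algebra_simps)
qed

lemma min_ge_tangent_parabola:
  fixes K x q :: real
  assumes "0 < q"
  shows "K - (q + K - x)\<^sup>2 / (4 * q) \<le> min K x"
proof (cases "K \<le> x")
  case True
  then show ?thesis using assms by simp
next
  case False
  have "(q + K - x)\<^sup>2 - 4 * q * (K - x) = (q - (K - x))\<^sup>2"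
    by (simp add: power2_eq_square algebra_simps)
  then have "4 * q * (K - x) \<le> (q + K - x)\<^sup>2"
    by (smt (verit) zero_le_power2)
  then have "K - x \<le> (q + K - x)\<^sup>2 / (4 * q)"
    using assms by (simp add: pos_le_divide_eq mult.commute)
  then show ?thesis using False by simp
qed

lemma expectation_binomial_pmf_min_ge:
  assumes p: "p \<in> {0..1}" and q: "0 < c + n * (1 - p) - K"
  shows "K - (n * p * (1 - p) + c\<^sup>2) / (4 * (c + n * (1 - p) - K))
           \<le> measure_pmf.expectation (binomial_pmf n p) (\<lambda>s. min K (real (n - s)))"
proof -
  define q where "q = c + n * (1 - p) - K"
  have "K - (n * p * (1 - p) + c\<^sup>2) / (4 * q)
          = measure_pmf.expectation (binomial_pmf n p) (\<lambda>s. K - (real s - (n * p - c))\<^sup>2 / (4 * q))"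
    using p expectation_binomial_pmf_sq_diff[OF p, of n "n * p - c"]
    by (simp add: Bochner_Integration.integral_diff)
  also have "\<dots> \<le> measure_pmf.expectation (binomial_pmf n p) (\<lambda>s. min K (real (n - s)))"
  proof (rule integral_mono)
    fix s :: nat
    have "q + K - (real n - real s) = real s - (n * p - c)"
      by (simp add: q_def algebra_simps)
    moreover have "0 < q" using q by (simp add: q_def)
    ultimately have "K - (real s - (n * p - c))\<^sup>2 / (4 * q) \<le> min K (real n - real s)"
      using min_ge_tangent_parabola[of q K "real n - real s"] by (simp only:)
    then show "K - (real s - (n * p - c))\<^sup>2 / (4 * q) \<le> min K (real (n - s))"
      by linarith
  qed (use p in simp_all)
  finally show ?thesis unfolding q_def .
qed

lemma ratio_ge_min_capacity:
  assumes m: "0 < m" and t: "0 \<le> t" "t \<le> m" "real n2 \<le> t" and r: "0 < r2" "r2 < r1"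
  shows "min (m - t) (real n1) / m \<le> ratio m p r1 r2 s1 n1 n2"
proof -
  define a where "a = min (real n2) (max (m - (1 - p) / p * real s1) 0)"
  have a: "0 \<le> a" "a \<le> t" unfolding a_def using t by auto
  have REW_ge: "r1 * min (m - t) (real n1) \<le> REW_A m p r1 r2 s1 n1 n2"
  proof -
    have "r1 * min (m - t) (real n1) \<le> r1 * min (m - a) (real n1)"
      using a r by (intro mult_left_mono) auto
    also have "\<dots> \<le> a * r2 + min (m - a) (real n1) * r1"
      using a r by (simp add: mult.commute)
    finally show ?thesis by (simp add: REW_A_def a_def Let_def)
  qed
  define Y where "Y = min (real n2) (max (m - real n1) 0)"
  have Y: "0 \<le> Y" "min (real n1) m + Y \<le> m" unfolding Y_def by auto
  have OPT_eq: "OPT m r1 r2 n1 n2 = r1 * min (real n1) m + r2 * Y"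
    by (simp add: OPT_def Y_def)
  have OPT_le: "OPT m r1 r2 n1 n2 \<le> r1 * m"
  proof -
    have "OPT m r1 r2 n1 n2 \<le> r1 * (min (real n1) m + Y)"
      unfolding OPT_eq using Y r by (simp add: distrib_left mult_right_mono)
    also have "\<dots> \<le> r1 * m" using Y r by simp
    finally show ?thesis .
  qed
  show ?thesis
  proof (cases "OPT m r1 r2 n1 n2 = 0")
    case True
    then show ?thesis using m t by (simp add: ratio_def)
  next
    case False
    have OPT_pos: "0 < OPT m r1 r2 n1 n2"
      using False Y r m unfolding OPT_eq by (smt (verit) mult_nonneg_nonneg of_nat_0_le_iff)
    have "min (m - t) (real n1) / m = r1 * min (m - t) (real n1) / (r1 * m)"
      using r by simp
    also have "\<dots> \<le> REW_A m p r1 r2 s1 n1 n2 / (r1 * m)"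
      using REW_ge m r by (intro divide_right_mono) auto
    also have "\<dots> \<le> REW_A m p r1 r2 s1 n1 n2 / OPT m r1 r2 n1 n2"
      using REW_ge OPT_pos OPT_le t r by (intro divide_left_mono) (auto intro: order_trans[rotated])
    finally show ?thesis using False by (simp add: ratio_def)
  qed
qed

lemma expectation_binomial_pmf_le_expected_ratio:
  assumes p: "p \<in> {0..1}"
    and g: "\<And>s1 s2. g s1 \<le> ratio m p r1 r2 s1 (h - s1) (l - s2)"
  shows "measure_pmf.expectation (binomial_pmf h p) g \<le> expected_ratio m p r1 r2 h l"
proof -
  let ?M = "pair_pmf (binomial_pmf h p) (binomial_pmf l p)"
  have fin: "finite (set_pmf ?M)" using finite_set_pmf_binomial_pmf[OF p] by simp
  have "measure_pmf.expectation (binomial_pmf h p) g = measure_pmf.expectation ?M (\<lambda>x. g (fst x))"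
    by (metis integral_map_pmf map_fst_pair_pmf)
  also have "\<dots> \<le> expected_ratio m p r1 r2 h l"
    unfolding expected_ratio_def
    by (rule integral_mono) (use fin g in \<open>auto intro: integrable_measure_pmf_finite\<close>)
  finally show ?thesis .
qed

lemma h0_bounds:
  assumes m: "1 \<le> m" and p: "0 < p" "p < 1"
  shows "0 \<le> h0 m p" and "h0 m p * (1 - p) \<le> m - sqrt m"
proof -
  define S where "S = {y. 0 \<le> y \<and> p * (m - sqrt m) / (1 - p) \<ge> y * p + sqrt y}"
  have zero_in: "0 \<in> S" using real_sqrt_le_self[OF m] p by (simp add: S_def)
  have ub: "y \<le> (m - sqrt m) / (1 - p)" if "y \<in> S" for y
  proof -
    have y0: "0 \<le> y" and y: "y * p + sqrt y \<le> p * (m - sqrt m) / (1 - p)"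
      using that by (simp_all add: S_def)
    have "y * p \<le> p * (m - sqrt m) / (1 - p)"
      using y real_sqrt_ge_zero[OF y0] by linarith
    then have "p * y \<le> p * ((m - sqrt m) / (1 - p))"
      by (simp add: mult.commute)
    then show ?thesis using p(1) by (rule mult_left_le_imp_le)
  qed
  then have bdd: "bdd_above S" by (rule bdd_aboveI)
  show "0 \<le> h0 m p" unfolding h0_def S_def[symmetric] by (rule cSup_upper[OF zero_in bdd])
  have "h0 m p \<le> (m - sqrt m) / (1 - p)"
    unfolding h0_def S_def[symmetric] using zero_in ub by (intro cSup_least) blast+
  then show "h0 m p * (1 - p) \<le> m - sqrt m" using p by (simp add: pos_le_divide_eq)
qed

lemma beta_mult_sqrt_ge:
  assumes "0 < p" "p < 1"
  shows "0.4215 \<le> beta p * sqrt (p * (1 - p))"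
proof -
  define r where "r = sqrt (p * (1 - p))"
  have r: "0 < r" "r\<^sup>2 = p * (1 - p)" using assms by (simp_all add: r_def)
  have "(1/2)\<^sup>2 - r\<^sup>2 = (p - 1/2)\<^sup>2" unfolding r(2) by (simp add: power2_eq_square algebra_simps)
  then have "r\<^sup>2 \<le> (1/2)\<^sup>2" by (smt (verit) zero_le_power2)
  then have r_le: "r \<le> 1/2" by (rule power2_le_imp_le) simp
  have "p\<^sup>2 + (1 - p)\<^sup>2 - 1/2 = 2 * (p - 1/2)\<^sup>2" by (simp add: power2_eq_square algebra_simps)
  then have "r \<le> p\<^sup>2 + (1 - p)\<^sup>2" using r_le by (smt (verit) zero_le_power2)
  moreover have "beta p * r = 0.4215 * (p\<^sup>2 + (1 - p)\<^sup>2) / r"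
    unfolding beta_def r(2)[symmetric] using r(1) by (simp add: power2_eq_square)
  ultimately show ?thesis using r(1) unfolding r_def[symmetric] by (simp add: le_divide_eq)
qed

lemma beta_pos:
  assumes "0 < p" "p < 1"
  shows "0 < beta p"
proof -
  have "0 < beta p * sqrt (p * (1 - p))"
    using beta_mult_sqrt_ge[OF assms] by (rule less_le_trans[rotated]) simp
  then show ?thesis by (rule zero_less_mult_pos2) (use assms in simp)
qed

lemma quarter_le_sqrt_var_mult_add_beta_div:
  assumes p: "0 < p" "p < 1" and u: "0 < u"
  shows "1 / 4 \<le> sqrt (p * (1 - p)) * u + beta p / u"
proof -
  define r where "r = sqrt (p * (1 - p))"
  have r: "0 < r" using p by (simp add: r_def)
  have br: "0.4215 \<le> beta p * r" unfolding r_def using beta_mult_sqrt_ge[OF p] .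
  show ?thesis
  proof (cases "1/4 \<le> r * u")
    case True
    then show ?thesis using beta_pos[OF p] u unfolding r_def by (smt (verit) divide_pos_pos)
  next
    case False
    have "r * u < r * (4 * beta p)" using False br by (simp add: algebra_simps)
    then have "u / 4 \<le> beta p" using r by simp
    then have "1 / 4 \<le> beta p / u" using u by (simp add: field_simps)
    moreover have "0 \<le> r * u" using r u by simp
    ultimately show ?thesis unfolding r_def by linarith
  qed
qed

lemma quadratic_penalty_le:
  fixes D \<sigma> V T a :: real
  assumes D: "0 \<le> D" and \<sigma>: "0 < \<sigma>" and V: "0 \<le> V" and T: "0 \<le> T" and a: "a \<le> 4 * (\<sigma> + V)"
  shows "(\<sigma>\<^sup>2 + a * T + (2 * D + \<sigma>)\<^sup>2) / (4 * (D + \<sigma> + T)) \<le> D + \<sigma> + V"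
proof -
  have "4 * (D + \<sigma> + T) * (D + \<sigma> + V) - (\<sigma>\<^sup>2 + a * T + (2 * D + \<sigma>)\<^sup>2)
          = 4 * D * \<sigma> + 2 * \<sigma>\<^sup>2 + 4 * (D + \<sigma>) * V + T * (4 * (D + \<sigma> + V) - a)"
    by (simp add: power2_eq_square algebra_simps)
  also have "\<dots> \<ge> 0" using D \<sigma> V T a by simp
  finally have "\<sigma>\<^sup>2 + a * T + (2 * D + \<sigma>)\<^sup>2 \<le> 4 * (D + \<sigma> + T) * (D + \<sigma> + V)" by simp
  moreover have "0 < 4 * (D + \<sigma> + T)" using D \<sigma> T by simp
  ultimately show ?thesis by (simp add: pos_divide_le_eq mult.commute)
qed

lemma h1_le_expectation_min:
  assumes m: "1 \<le> m" and p: "0 < p" "p < 1" and h0_pos: "0 < h0 m p" and h: "h0 m p \<le> real h"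
  shows "h1 m p \<le> measure_pmf.expectation (binomial_pmf h p) (\<lambda>s. min (m - sqrt m) (real (h - s)))"
proof -
  define H where "H = h0 m p"
  define K where "K = m - sqrt m"
  define \<sigma> where "\<sigma> = sqrt (p * (1 - p)) * sqrt H"
  define V where "V = beta p / sqrt H"
  define D where "D = K - H * (1 - p)"
  define T where "T = (real h - H) * (1 - p)"
  have \<sigma>: "0 < \<sigma>" using p h0_pos by (simp add: \<sigma>_def H_def)
  have D: "0 \<le> D" using h0_bounds(2)[OF m p] by (simp add: D_def H_def K_def)
  have T: "0 \<le> T" using h p by (simp add: T_def H_def)
  have V: "0 \<le> V" using beta_pos[OF p] h0_pos by (simp add: V_def H_def)
  have "1 / 4 \<le> \<sigma> + V"
    unfolding \<sigma>_def V_def using quarter_le_sqrt_var_mult_add_beta_div[OF p] h0_pos by (simp add: H_def)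
  then have p_le: "p \<le> 4 * (\<sigma> + V)" using p by simp
  have variance: "real h * p * (1 - p) = \<sigma>\<^sup>2 + p * T"
    using p h0_pos by (simp add: \<sigma>_def T_def H_def power_mult_distrib algebra_simps)
  have slack: "(2 * D + \<sigma>) + real h * (1 - p) - K = D + \<sigma> + T"
    by (simp add: D_def T_def algebra_simps)
  have "h1 m p = K - (D + \<sigma> + V)"
    by (simp add: h1_def D_def \<sigma>_def V_def H_def real_sqrt_mult)
  also have "\<dots> \<le> K - (\<sigma>\<^sup>2 + p * T + (2 * D + \<sigma>)\<^sup>2) / (4 * (D + \<sigma> + T))"
    using quadratic_penalty_le[OF D \<sigma> V T p_le] by simp
  also have "\<dots> = K - (real h * p * (1 - p) + (2 * D + \<sigma>)\<^sup>2)
                      / (4 * ((2 * D + \<sigma>) + real h * (1 - p) - K))"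
    by (simp only: variance slack)
  also have "\<dots> \<le> measure_pmf.expectation (binomial_pmf h p) (\<lambda>s. min K (real (h - s)))"
    using p D \<sigma> T by (intro expectation_binomial_pmf_min_ge) (simp_all only: slack, auto)
  finally show ?thesis by (simp add: K_def)
qed

theorem lemma6:
  fixes m p r1 r2 :: real
  assumes "1 \<le> m"
    and "0 < p" "p < 1"
    and "0 < r2" "r2 < r1" "r1 < 1"
  shows "\<forall>h l::nat. real h \<ge> max (h0 m p) (sqrt m) \<and> real l < sqrt m \<longrightarrow>
           expected_ratio m p r1 r2 h l \<ge> min (1 - 1 / sqrt m) (h1 m p / m)"
proof (intro allI impI)
  fix h l :: nat
  assume hl: "real h \<ge> max (h0 m p) (sqrt m) \<and> real l < sqrt m"
  have p: "p \<in> {0..1}" using assms(2,3) by simp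
  have sqrt_m: "0 \<le> sqrt m" "sqrt m \<le> m" using real_sqrt_le_self[OF assms(1)] assms(1) by simp_all
  define E where "E = measure_pmf.expectation (binomial_pmf h p) (\<lambda>s. min (m - sqrt m) (real (h - s)))"
  have "E / m = measure_pmf.expectation (binomial_pmf h p) (\<lambda>s. min (m - sqrt m) (real (h - s)) / m)"
    by (simp add: E_def)
  also have "\<dots> \<le> expected_ratio m p r1 r2 h l"
    using p hl sqrt_m assms(1,4,5)
    by (intro expectation_binomial_pmf_le_expected_ratio ratio_ge_min_capacity) auto
  finally have E_le: "E / m \<le> expected_ratio m p r1 r2 h l" .
  have "h1 m p / m \<le> E / m"
  proof (cases "h0 m p = 0")
    case True
    \<comment> \<open>then \<open>h1 m p = 0\<close>, because \<open>beta p / sqrt 0 = 0\<close>\<close>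
    have "0 \<le> E" unfolding E_def using sqrt_m by (intro Bochner_Integration.integral_nonneg) simp
    then show ?thesis using True assms(1) by (simp add: h1_def)
  next
    case False
    then have "0 < h0 m p" using h0_bounds(1)[OF assms(1-3)] by simp
    then have "h1 m p \<le> E"
      unfolding E_def using hl assms(1-3) by (intro h1_le_expectation_min) auto
    then show ?thesis using assms(1) by (simp add: divide_right_mono)
  qed
  then show "min (1 - 1 / sqrt m) (h1 m p / m) \<le> expected_ratio m p r1 r2 h l"
    using E_le by linarith
qed

end
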